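(* Let $\Sigma^2\subset\widetilde{\mathbb{C}}$ be a domain with para-complex coordinate $z=u+jv$, let $(F,G)=(f^1+jf^2,\,g^1+jg^2):\Sigma^2\to\widetilde{\mathbb{C}}^2$ be para-holomorphic, and let $\psi:\Sigma^2\to\mathbb{R}^3$ be the indefinite generalized IA-map \[ \psi=\Bigl(f^1-g^1,\ f^2+g^2,\ -\int\bigl\{(f^1+g^1)(f^1_u-g^1_u)+(-f^2+g^2)(f^2_u+g^2_u)\bigr\}du+\bigl\{(f^1+g^1)(f^2_u-g^2_u)+(-f^2+g^2)(f^1_u+g^1_u)\bigr\}dv\Bigr). \] Then $p\in\Sigma^2$ is a singular point of $\psi$ (i.e. $\psi$ is not immersive at $p$) if and only if $|dF|=|dG|$ at $p$, i.e. $(f^1_u)^2-(f^2_u)^2=(g^1_u)^2-(g^2_u)^2$ at $p$.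
   Context: $\widetilde{\mathbb{C}}=\{a+jb\}$ with $j^2=1$, $|u+jv|=u^2-v^2$. $F=f^1+jf^2$ is para-holomorphic if $f^1_u=f^2_v$, $f^1_v=f^2_u$; $|dF|$ denotes $|F'|$ with $F'=f^1_u+jf^2_u$. The third component is a locally defined primitive of a closed $1$-form. *)

theory Defs
  imports "HOL-Analysis.Analysis"
begin

text \<open>Para-complex plane identified with real pairs: z = u + j v is (u, v).\<close>

definition pu :: "(real \<times> real \<Rightarrow> real) \<Rightarrow> real \<times> real \<Rightarrow> real" where
  "pu f p = frechet_derivative f (at p) (1, 0)"

definition pv :: "(real \<times> real \<Rightarrow> real) \<Rightarrow> real \<times> real \<Rightarrow> real" where
  "pv f p = frechet_derivative f (at p) (0, 1)"

definition para_holomorphic_on ::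
  "(real \<times> real \<Rightarrow> real) \<Rightarrow> (real \<times> real \<Rightarrow> real) \<Rightarrow> (real \<times> real) set \<Rightarrow> bool" where
  "para_holomorphic_on f1 f2 S \<longleftrightarrow>
     (\<forall>p\<in>S. f1 differentiable (at p) \<and> f2 differentiable (at p) \<and>
            pu f1 p = pv f2 p \<and> pv f1 p = pu f2 p)"

definition immersive_at ::
  "(real \<times> real \<Rightarrow> real \<times> real \<times> real) \<Rightarrow> real \<times> real \<Rightarrow> bool" where
  "immersive_at \<psi> p \<longleftrightarrow> \<psi> differentiable (at p) \<and> inj (frechet_derivative \<psi> (at p))"

end

theory Submission
  imports Defs
begin

text \<open>With \<open>F' = a + j b\<close> and \<open>G' = c + j d\<close> at \<open>p\<close>, the para-Cauchy-Riemann equations make the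
  differential of the first two components of \<open>\<psi>\<close> the matrix \<open>[[a - c, b - d], [b + d, a + c]]\<close>,
  of determinant \<open>(a\<^sup>2 - b\<^sup>2) - (c\<^sup>2 - d\<^sup>2) = |dF| - |dG|\<close>. The differential of the third component
  is \<open>-(f\<^sup>1 + g\<^sup>1)\<close> times the first row plus \<open>(f\<^sup>2 - g\<^sup>2)\<close> times the second, so it never adds
  rank: \<open>\<psi>\<close> is immersive at \<open>p\<close> exactly when that determinant is nonzero.\<close>

lemma frechet_derivative_eq_pu_pv:
  assumes "f differentiable (at p)"
  shows "frechet_derivative f (at p) = (\<lambda>v. fst v * pu f p + snd v * pv f p)"
proof
  fix v :: "real \<times> real"
  have lin: "linear (frechet_derivative f (at p))"
    using assms frechet_derivative_works has_derivative_linear by blast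
  have "frechet_derivative f (at p) v
      = frechet_derivative f (at p) (fst v *\<^sub>R (1, 0) + snd v *\<^sub>R (0, 1))"
    by (cases v) simp
  also have "\<dots> = fst v * pu f p + snd v * pv f p"
    unfolding linear_add[OF lin] linear_scale[OF lin] by (simp add: pu_def pv_def)
  finally show "frechet_derivative f (at p) v = fst v * pu f p + snd v * pv f p" .
qed

lemma has_derivative_pu_pv:
  assumes "f differentiable (at p)"
  shows "(f has_derivative (\<lambda>v. fst v * pu f p + snd v * pv f p)) (at p)"
  using assms frechet_derivative_eq_pu_pv frechet_derivative_works by metis

lemma para_holomorphic_has_derivative:
  assumes "para_holomorphic_on f1 f2 S" and "p \<in> S"
  shows "(f1 has_derivative (\<lambda>v. fst v * pu f1 p + snd v * pu f2 p)) (at p)"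
    and "(f2 has_derivative (\<lambda>v. fst v * pu f2 p + snd v * pu f1 p)) (at p)"
  using assms has_derivative_pu_pv[of f1 p] has_derivative_pu_pv[of f2 p]
  unfolding para_holomorphic_on_def by auto

lemma inj_triple_iff_inj_pair:
  "inj (\<lambda>v. (f v, g v, k (f v) (g v))) \<longleftrightarrow> inj (\<lambda>v. (f v, g v))"
  unfolding inj_def by auto

lemma inj_linear_real2_iff:
  fixes \<alpha> \<beta> \<gamma> \<delta> :: real
  shows "inj (\<lambda>v::real \<times> real. (fst v * \<alpha> + snd v * \<beta>, fst v * \<gamma> + snd v * \<delta>))
         \<longleftrightarrow> \<alpha> * \<delta> - \<beta> * \<gamma> \<noteq> 0"
    (is "inj ?L \<longleftrightarrow> ?det \<noteq> 0")
proof
  assume inj: "inj ?L"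
  show "?det \<noteq> 0"
  proof
    assume det: "?det = 0"
    have ker1: "?L (\<beta>, -\<alpha>) = ?L 0" and ker2: "?L (\<delta>, -\<gamma>) = ?L 0"
      using det by (simp_all add: algebra_simps)
    have "\<alpha> = 0 \<and> \<beta> = 0 \<and> \<gamma> = 0 \<and> \<delta> = 0"
      using injD[OF inj ker1] injD[OF inj ker2] by (simp add: zero_prod_def)
    then have "?L (1, 0) = ?L 0"
      by simp
    from injD[OF inj this] show False
      by (simp add: zero_prod_def)
  qed
next
  assume det: "?det \<noteq> 0"
  show "inj ?L"
  proof (rule injI)
    fix v w :: "real \<times> real"
    assume "?L v = ?L w"
    then have row1: "(fst v - fst w) * \<alpha> + (snd v - snd w) * \<beta> = 0"
      and row2: "(fst v - fst w) * \<gamma> + (snd v - snd w) * \<delta> = 0"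
      by (auto simp: algebra_simps)
    have "(fst v - fst w) * ?det = 0" and "(snd v - snd w) * ?det = 0"
      using row1 row2 by algebra+
    with det show "v = w"
      by (simp add: prod_eq_iff)
  qed
qed

theorem mainTheorem4:
  fixes f1 f2 g1 g2 h :: "real \<times> real \<Rightarrow> real"
    and S U :: "(real \<times> real) set" and p :: "real \<times> real"
  assumes "open S" and "connected S"
    and "para_holomorphic_on f1 f2 S" and "para_holomorphic_on g1 g2 S"
    and "open U" and "U \<subseteq> S" and "p \<in> U"
    and "\<forall>q\<in>U. (h has_derivative (\<lambda>(a, b).
            - (a * ((f1 q + g1 q) * (pu f1 q - pu g1 q) + (- f2 q + g2 q) * (pu f2 q + pu g2 q))
             + b * ((f1 q + g1 q) * (pu f2 q - pu g2 q) + (- f2 q + g2 q) * (pu f1 q + pu g1 q)))))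
          (at q)"
  shows "\<not> immersive_at (\<lambda>q. (f1 q - g1 q, f2 q + g2 q, h q)) p \<longleftrightarrow>
         (pu f1 p)\<^sup>2 - (pu f2 p)\<^sup>2 = (pu g1 p)\<^sup>2 - (pu g2 p)\<^sup>2"
proof -
  have "p \<in> S"
    using assms(6,7) by blast
  define a b c d where "a = pu f1 p" and "b = pu f2 p" and "c = pu g1 p" and "d = pu g2 p"
  define X Y where "X = f1 p + g1 p" and "Y = - f2 p + g2 p"
  define A B where "A v = fst v * (a - c) + snd v * (b - d)"
    and "B v = fst v * (b + d) + snd v * (a + c)" for v :: "real \<times> real"
  have dh: "(h has_derivative (\<lambda>v. - (X * A v + Y * B v))) (at p)"
    using bspec[OF assms(8,7)] by (rule has_derivative_eq_rhs)
      (auto simp: fun_eq_iff a_def b_def c_def d_def X_def Y_def A_def B_def algebra_simps)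
  have dF: "(f1 has_derivative (\<lambda>v. fst v * a + snd v * b)) (at p)"
      "(f2 has_derivative (\<lambda>v. fst v * b + snd v * a)) (at p)"
    unfolding a_def b_def by (fact para_holomorphic_has_derivative[OF assms(3) \<open>p \<in> S\<close>])+
  have dG: "(g1 has_derivative (\<lambda>v. fst v * c + snd v * d)) (at p)"
      "(g2 has_derivative (\<lambda>v. fst v * d + snd v * c)) (at p)"
    unfolding c_def d_def by (fact para_holomorphic_has_derivative[OF assms(4) \<open>p \<in> S\<close>])+
  have d\<psi>: "((\<lambda>q. (f1 q - g1 q, f2 q + g2 q, h q)) has_derivative
      (\<lambda>v. (A v, B v, - (X * A v + Y * B v)))) (at p)"
    using has_derivative_Pair[OF has_derivative_diff[OF dF(1) dG(1)]
        has_derivative_Pair[OF has_derivative_add[OF dF(2) dG(2)] dh]]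
    by (rule has_derivative_eq_rhs) (simp add: fun_eq_iff A_def B_def algebra_simps)
  have "immersive_at (\<lambda>q. (f1 q - g1 q, f2 q + g2 q, h q)) p
      \<longleftrightarrow> inj (\<lambda>v. (A v, B v, - (X * A v + Y * B v)))"
    unfolding immersive_at_def frechet_derivative_at[OF d\<psi>, symmetric]
    using differentiableI[OF d\<psi>] by simp
  also have "\<dots> \<longleftrightarrow> inj (\<lambda>v. (A v, B v))"
    by (rule inj_triple_iff_inj_pair)
  also have "\<dots> \<longleftrightarrow> (a - c) * (a + c) - (b - d) * (b + d) \<noteq> 0"
    unfolding A_def B_def by (rule inj_linear_real2_iff)
  also have "(a - c) * (a + c) - (b - d) * (b + d) = (a\<^sup>2 - b\<^sup>2) - (c\<^sup>2 - d\<^sup>2)"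
    by (simp add: power2_eq_square algebra_simps)
  finally show ?thesis
    by (simp add: a_def b_def c_def d_def)
qed

end
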